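(* Let MSCQ hold at $\bar x$ with modulus $\sigma>0$. Let $x_k\in\Gamma$ with $x_k\to\bar x$, $x_k^*\to0$, $\lambda^k\to\tilde\lambda$ and $u_k\to\tilde u$ be sequences such that for all $k\in\mathbb N$ $$\lambda^k\in\Lambda\big(x_k,x_k^*-\nabla f(x_k);u_k\big)\cap\sigma\|x_k^*-\nabla f(x_k)\|\mathbb B,\qquad u_k\in K_\Gamma\big(x_k,x_k^*-\nabla f(x_k)\big)\cap\mathcal S,$$ and $\limsup_{k\to\infty}\langle\mathcal H(x_k,\lambda^k)u_k,u_k\rangle<\infty$. Then $$\tilde\lambda\in\Lambda\big(\bar x,-\nabla f(\bar x)\big)\cap\sigma\|\nabla f(\bar x)\|\mathbb B\subset\Lambda^0\big(\bar x,-\nabla f(\bar x)\big),$$ $$\tilde u\in\mathcal S,\quad\langle\tilde\lambda,\nabla g(\bar x)\tilde u\rangle=0,\quad\tilde\lambda_0\big(\|\nabla g_r(\bar x)\tilde u\|^2-(\nabla g_0(\bar x)\tilde u)^2\big)=0.$$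
   Context: Setting. Let $n,m\ge1$ and let $\mathcal Q:=\{(q_0,q_r)\in\mathbb R\times\mathbb R^m:\|q_r\|\le q_0\}$ be the second-order cone. For $q=(q_0,q_r)\in\mathbb R^{1+m}$ write $\hat q:=(-q_0,q_r)$, and let $\mathcal Q^*:=\{\hat q: q\in\mathcal Q\}=\{(q_0,q_r):\|q_r\|\le-q_0\}$. The normal cone to $\mathcal Q$ at $q\in\mathcal Q$ is $N_{\mathcal Q}(q)=\mathcal Q^*$ if $q=0$, $N_{\mathcal Q}(q)=\{0\}$ if $q\in\operatorname{int}\mathcal Q$, and $N_{\mathcal Q}(q)=\{\alpha\hat q:\alpha\ge0\}$ if $q\in\operatorname{bd}\mathcal Q\setminus\{0\}$. Problem (P) is: minimize $f(x)$ subject to $x\in\Gamma:=\{x\in\mathbb R^n: g(x)\in\mathcal Q\}$, where $f:\mathbb R^n\to\mathbb R$ and $g=(g_0,g_r):\mathbb R^n\to\mathbb R\times\mathbb R^m$ are $C^2$-smooth around a point $\bar x\in\Gamma$ with $g(\bar x)=0$. $\nabla g(x)$ is the Jacobian, $\nabla g(x)^*$ its transpose, $\nabla^2 g(x)(u,v)\in\mathbb R^{1+m}$ is the vector with components $u^T\nabla^2 g_i(x)v$, and $\nabla^2\langle\lambda,g\rangle(x)=\sum_i\lambda_i\nabla^2 g_i(x)$. $\mathcal S$ is the unit sphere, $\mathbb B$ the closed unit ball, and $r\mathbb B$ the closed ball of radius $r$ about $0$. MSCQ. The metric subregularity constraint qualification (MSCQ) holds at $\bar x$ with modulus $\sigma>0$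 if there is a neighborhood $U$ of $\bar x$ with $\operatorname{dist}(x;\Gamma)\le\sigma\operatorname{dist}(g(x);\mathcal Q)$ for all $x\in U$. Multipliers and cones. $T_\Gamma(x)$ is the Bouligand tangent cone $\{v:\exists t_k\downarrow0,\ v_k\to v,\ x+t_kv_k\in\Gamma\}$. For $x\in\Gamma$, $x^*\in\mathbb R^n$: $\Lambda(x,x^* ):=\{\lambda\in N_{\mathcal Q}(g(x)):\nabla g(x)^*\lambda=x^*\}$; $\Lambda^0(x,x^* ):=\{0\}$ if $x^*=0$ and $\Lambda^0(x,x^* ):=\Lambda(x,x^* )$ otherwise; the critical cone is $K_\Gamma(x,x^* ):=\{u\in T_\Gamma(x):\langle x^*,u\rangle=0\}$. The curvature mapping is $\mathcal H(x,\lambda):=\frac{-\lambda_0}{g_0(x)}\big(\nabla g_r(x)^*\nabla g_r(x)-\nabla g_0(x)^*\nabla g_0(x)\big)$ if $g(x)\in\operatorname{bd}\mathcal Q\setminus\{0\}$ and $\mathcal H(x,\lambda):=0$ otherwise. The directional multiplier set is $\Lambda(x,x^*;u):=\operatorname{argmax}_{\lambda\in\Lambda(x,x^* )}\langle(\nabla^2\langle\lambda,g\rangle(x)+\mathcal H(x,\lambda))u,u\rangle$. *)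

theory Defs
  imports "HOL-Analysis.Analysis"
begin

text \<open>Points of R x R^m are pairs (q0, qr); the norm and inner product on the
product type are the Euclidean ones.\<close>

definition SOC :: "(real \<times> (real^'m)) set" where
  "SOC = {q. norm (snd q) \<le> fst q}"

definition hat :: "real \<times> (real^'m) \<Rightarrow> real \<times> (real^'m)" where
  "hat q = (- fst q, snd q)"

definition SOC_dual :: "(real \<times> (real^'m)) set" where
  "SOC_dual = hat ` SOC"

definition normal_SOC :: "real \<times> (real^'m) \<Rightarrow> (real \<times> (real^'m)) set" where
  "normal_SOC q =
     (if q = 0 then SOC_dual
      else if q \<in> interior SOC then {0}
      else if q \<in> frontier SOC then {\<alpha> *\<^sub>R hat q | \<alpha>. \<alpha> \<ge> 0}
      else {})"

definition Gamma :: "(real^'n \<Rightarrow> real) \<Rightarrow> (real^'n \<Rightarrow> real^'m) \<Rightarrow> (real^'n) set" where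
  "Gamma g0 gr = {x. (g0 x, gr x) \<in> SOC}"

text \<open>Jacobian of g applied to a direction: nabla g(x) u = (nabla g0(x) u, nabla gr(x) u),
  with gg0 x the gradient of g0 and Jr x the Jacobian matrix (m x n) of gr.\<close>
definition jac_g :: "(real^'n \<Rightarrow> real^'n) \<Rightarrow> (real^'n \<Rightarrow> real^'n^'m) \<Rightarrow> real^'n \<Rightarrow> real^'n
    \<Rightarrow> real \<times> (real^'m)" where
  "jac_g gg0 Jr x u = (gg0 x \<bullet> u, Jr x *v u)"

definition jac_g_adj :: "(real^'n \<Rightarrow> real^'n) \<Rightarrow> (real^'n \<Rightarrow> real^'n^'m) \<Rightarrow> real^'n
    \<Rightarrow> real \<times> (real^'m) \<Rightarrow> real^'n" where
  "jac_g_adj gg0 Jr x lam = fst lam *\<^sub>R gg0 x + transpose (Jr x) *v snd lam"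

definition Lambda ::
  "(real^'n \<Rightarrow> real) \<Rightarrow> (real^'n \<Rightarrow> real^'m) \<Rightarrow> (real^'n \<Rightarrow> real^'n) \<Rightarrow> (real^'n \<Rightarrow> real^'n^'m)
   \<Rightarrow> real^'n \<Rightarrow> real^'n \<Rightarrow> (real \<times> (real^'m)) set" where
  "Lambda g0 gr gg0 Jr x xs =
     {lam \<in> normal_SOC (g0 x, gr x). jac_g_adj gg0 Jr x lam = xs}"

definition Lambda0 ::
  "(real^'n \<Rightarrow> real) \<Rightarrow> (real^'n \<Rightarrow> real^'m) \<Rightarrow> (real^'n \<Rightarrow> real^'n) \<Rightarrow> (real^'n \<Rightarrow> real^'n^'m)
   \<Rightarrow> real^'n \<Rightarrow> real^'n \<Rightarrow> (real \<times> (real^'m)) set" where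
  "Lambda0 g0 gr gg0 Jr x xs = (if xs = 0 then {0} else Lambda g0 gr gg0 Jr x xs)"

definition tangent_cone :: "'a::real_normed_vector set \<Rightarrow> 'a \<Rightarrow> 'a set" where
  "tangent_cone S x = {v. \<exists>t w. (\<forall>k. t k > 0) \<and> t \<longlonglongrightarrow> 0 \<and> w \<longlonglongrightarrow> v
                              \<and> (\<forall>k. x + t k *\<^sub>R w k \<in> S)}"

definition critical_cone ::
  "(real^'n \<Rightarrow> real) \<Rightarrow> (real^'n \<Rightarrow> real^'m) \<Rightarrow> real^'n \<Rightarrow> real^'n \<Rightarrow> (real^'n) set" where
  "critical_cone g0 gr x xs = {u \<in> tangent_cone (Gamma g0 gr) x. xs \<bullet> u = 0}"

definition curv ::
  "(real^'n \<Rightarrow> real) \<Rightarrow> (real^'n \<Rightarrow> real^'m) \<Rightarrow> (real^'n \<Rightarrow> real^'n) \<Rightarrow> (real^'n \<Rightarrow> real^'n^'m)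
   \<Rightarrow> real^'n \<Rightarrow> real \<times> (real^'m) \<Rightarrow> real^'n^'n" where
  "curv g0 gr gg0 Jr x lam =
     (if (g0 x, gr x) \<in> frontier SOC - {0}
      then (- fst lam / g0 x) *\<^sub>R
             (transpose (Jr x) ** Jr x - (\<chi> i j. gg0 x $ i * gg0 x $ j))
      else 0)"

text \<open>Hessian of the Lagrangian term: nabla^2 <lambda, g>(x), with Hg0 x the Hessian of g0
  and Hr x i the Hessian of the i-th component of gr.\<close>
definition hess_lag ::
  "(real^'n \<Rightarrow> real^'n^'n) \<Rightarrow> (real^'n \<Rightarrow> 'm \<Rightarrow> real^'n^'n) \<Rightarrow> real^'n \<Rightarrow> real \<times> (real^'m)
   \<Rightarrow> real^'n^'n" where
  "hess_lag Hg0 Hr x lam = fst lam *\<^sub>R Hg0 x + (\<Sum>i\<in>UNIV. snd lam $ i *\<^sub>R Hr x i)"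

definition quadf :: "real^'n^'n \<Rightarrow> real^'n \<Rightarrow> real" where
  "quadf M u = u \<bullet> (M *v u)"

definition dir_Lambda ::
  "(real^'n \<Rightarrow> real) \<Rightarrow> (real^'n \<Rightarrow> real^'m) \<Rightarrow> (real^'n \<Rightarrow> real^'n) \<Rightarrow> (real^'n \<Rightarrow> real^'n^'m)
   \<Rightarrow> (real^'n \<Rightarrow> real^'n^'n) \<Rightarrow> (real^'n \<Rightarrow> 'm \<Rightarrow> real^'n^'n)
   \<Rightarrow> real^'n \<Rightarrow> real^'n \<Rightarrow> real^'n \<Rightarrow> (real \<times> (real^'m)) set" where
  "dir_Lambda g0 gr gg0 Jr Hg0 Hr x xs u =
     {lam \<in> Lambda g0 gr gg0 Jr x xs.
        \<forall>mu \<in> Lambda g0 gr gg0 Jr x xs.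
          quadf (hess_lag Hg0 Hr x mu + curv g0 gr gg0 Jr x mu) u
          \<le> quadf (hess_lag Hg0 Hr x lam + curv g0 gr gg0 Jr x lam) u}"

definition MSCQ ::
  "(real^'n \<Rightarrow> real) \<Rightarrow> (real^'n \<Rightarrow> real^'m) \<Rightarrow> real^'n \<Rightarrow> real \<Rightarrow> bool" where
  "MSCQ g0 gr xb \<sigma> \<longleftrightarrow> \<sigma> > 0 \<and>
     (\<exists>U. open U \<and> xb \<in> U \<and>
        (\<forall>x\<in>U. infdist x (Gamma g0 gr) \<le> \<sigma> * infdist (g0 x, gr x) SOC))"

end

theory Submission
  imports Defs
begin

text \<open>Passing to the limit in the defining relations shows that \<open>\<tilde>\<lambda>\<close> is a bounded multiplier at
  \<open>x\<^sub>b\<close> and that \<open>\<tilde>\<lambda> \<perp> \<nabla>g(x\<^sub>b)\<tilde>u\<close>. If \<open>\<tilde>\<lambda>\<^sub>0 \<noteq> 0\<close>, this orthogonality to a multiplier in the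
  dual cone forces \<open>|\<nabla>g\<^sub>0 \<tilde>u| \<le> \<parallel>\<nabla>g\<^sub>r \<tilde>u\<parallel>\<close>. Were the inequality strict, then eventually
  \<open>g(x\<^sub>k) \<noteq> 0\<close> (a tangent direction at the vertex satisfies the reverse inequality), \<open>\<lambda>\<^sup>k\<close> would be a
  nonzero boundary multiplier, and the curvature term
  \<open>-\<lambda>\<^sup>k\<^sub>0 (\<parallel>\<nabla>g\<^sub>r u\<^sub>k\<parallel>\<^sup>2 - (\<nabla>g\<^sub>0 u\<^sub>k)\<^sup>2) / g\<^sub>0(x\<^sub>k)\<close> would diverge because \<open>g\<^sub>0(x\<^sub>k) \<rightarrow> 0\<close>,
  contradicting the bounded limsup.\<close>

lemma tendsto_matrix_vector_mult:
  fixes A :: "'a \<Rightarrow> real^'n^'m"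
  assumes "(A \<longlongrightarrow> A0) F" "(x \<longlongrightarrow> x0) F"
  shows "((\<lambda>k. A k *v x k) \<longlongrightarrow> A0 *v x0) F"
proof (rule vec_tendstoI)
  fix i
  have "((\<lambda>k. \<Sum>j\<in>UNIV. A k $ i $ j * x k $ j) \<longlongrightarrow> (\<Sum>j\<in>UNIV. A0 $ i $ j * x0 $ j)) F"
    by (intro tendsto_sum tendsto_mult tendsto_vec_nth assms)
  then show "((\<lambda>k. (A k *v x k) $ i) \<longlongrightarrow> (A0 *v x0) $ i) F"
    by (simp add: matrix_vector_mult_def)
qed

lemma tendsto_transpose:
  fixes A :: "'a \<Rightarrow> real^'n^'m"
  assumes "(A \<longlongrightarrow> A0) F"
  shows "((\<lambda>k. transpose (A k)) \<longlongrightarrow> transpose A0) F"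
proof (intro vec_tendstoI)
  fix i j
  have "((\<lambda>k. A k $ j $ i) \<longlongrightarrow> A0 $ j $ i) F"
    by (intro tendsto_vec_nth assms)
  then show "((\<lambda>k. transpose (A k) $ i $ j) \<longlongrightarrow> transpose A0 $ i $ j) F"
    by (simp add: transpose_def)
qed

lemma inner_jac_g: "lam \<bullet> jac_g gg0 Jr x u = jac_g_adj gg0 Jr x lam \<bullet> u"
  by (cases lam) (simp add: jac_g_def jac_g_adj_def inner_add_left dot_lmul_matrix)

lemma SOC_dual_iff: "q \<in> SOC_dual \<longleftrightarrow> norm (snd q) \<le> - fst q"
proof
  assume "q \<in> SOC_dual"
  then show "norm (snd q) \<le> - fst q"
    by (auto simp: SOC_dual_def SOC_def hat_def)
next
  assume "norm (snd q) \<le> - fst q"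
  then have "hat q \<in> SOC" "q = hat (hat q)"
    by (auto simp: SOC_def hat_def)
  then show "q \<in> SOC_dual"
    unfolding SOC_dual_def by blast
qed

lemma fst_pos_if_SOC_nonzero:
  assumes "q \<in> SOC" "q \<noteq> 0"
  shows "fst q > 0"
proof -
  have "norm (snd q) \<le> fst q"
    using assms(1) by (simp add: SOC_def)
  moreover have "fst q \<noteq> 0"
    using assms calculation by (cases q) (auto simp: zero_prod_def)
  ultimately show ?thesis
    using norm_ge_zero[of "snd q"] by linarith
qed

lemma normal_SOC_subset_dual:
  assumes "q \<in> SOC" "lam \<in> normal_SOC q"
  shows "lam \<in> SOC_dual"
proof (cases "q = 0 \<or> q \<in> interior SOC")
  case True
  then show ?thesis
    using assms by (auto simp: normal_SOC_def SOC_dual_iff split: if_splits)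
next
  case False
  with assms obtain a where a: "a \<ge> 0" "lam = a *\<^sub>R hat q"
    by (auto simp: normal_SOC_def split: if_splits)
  have "a * norm (snd q) \<le> a * fst q"
    using assms(1) a(1) by (simp add: SOC_def mult_left_mono)
  then show ?thesis
    using a by (simp add: SOC_dual_iff hat_def)
qed

lemma normal_SOC_nonzero_imp_frontier:
  assumes "q \<in> SOC" "q \<noteq> 0" "lam \<in> normal_SOC q" "lam \<noteq> 0"
  shows "q \<in> frontier SOC - {0}"
proof -
  have "q \<notin> interior SOC"
    using assms by (auto simp: normal_SOC_def)
  then show ?thesis
    using assms(1,2) closure_subset by (auto simp: frontier_def)
qed

lemma abs_fst_le_norm_snd_if_orthogonal_dual:
  assumes dual: "norm (snd lam) \<le> - fst lam" and "fst lam \<noteq> 0" and orth: "lam \<bullet> q = 0"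
  shows "\<bar>fst q\<bar> \<le> norm (snd q)"
proof -
  have neg: "- fst lam > 0"
    using assms(2) dual norm_ge_zero[of "snd lam"] by linarith
  have "snd lam \<bullet> snd q = - (fst lam * fst q)"
    using orth by (cases lam, cases q) (simp add: algebra_simps)
  then have "(- fst lam) * \<bar>fst q\<bar> = \<bar>snd lam \<bullet> snd q\<bar>"
    using neg by (simp add: abs_mult)
  also have "\<dots> \<le> norm (snd lam) * norm (snd q)"
    by (rule Cauchy_Schwarz_ineq2)
  also have "\<dots> \<le> (- fst lam) * norm (snd q)"
    using dual by (intro mult_right_mono) auto
  finally show ?thesis
    using neg by simp
qed

lemma outer_product_mult_vec: "(\<chi> i j. a $ i * a $ j) *v u = (a \<bullet> u) *\<^sub>R (a::real^'n)"
proof -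
  have "(\<Sum>j\<in>UNIV. a $ i * a $ j * u $ j) = a $ i * (a \<bullet> u)" for i
    by (simp add: inner_vec_def sum_distrib_left mult.assoc)
  then show ?thesis
    by (simp add: vec_eq_iff matrix_vector_mult_def)
qed

lemma quadf_transpose_mult_self: "quadf (transpose J ** J) u = (norm (J *v u))\<^sup>2"
proof -
  have "quadf (transpose J ** J) u = u \<bullet> (transpose J *v (J *v u))"
    by (simp only: quadf_def matrix_vector_mul_assoc)
  also have "\<dots> = ((J *v u) v* J) \<bullet> u"
    by (simp only: transpose_matrix_vector inner_commute)
  also have "\<dots> = (J *v u) \<bullet> (J *v u)"
    by (rule dot_lmul_matrix)
  finally show ?thesis
    by (simp add: power2_norm_eq_inner)
qed

lemma quadf_curvature_matrix:
  fixes J :: "real^'n^'m" and a u :: "real^'n"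
  shows "quadf (c *\<^sub>R (transpose J ** J - (\<chi> i j. a $ i * a $ j))) u
           = c * ((norm (J *v u))\<^sup>2 - (a \<bullet> u)\<^sup>2)"
proof -
  have "quadf (c *\<^sub>R (transpose J ** J - (\<chi> i j. a $ i * a $ j))) u
          = c * (quadf (transpose J ** J) u - u \<bullet> ((a \<bullet> u) *\<^sub>R a))"
    by (simp add: quadf_def scaleR_matrix_vector_assoc[symmetric] matrix_vector_mult_diff_rdistrib
        outer_product_mult_vec inner_diff_right)
  then show ?thesis
    by (simp add: quadf_transpose_mult_self power2_eq_square inner_commute)
qed

lemma quadf_curv_nonzero_multiplier:
  assumes "(g0 x, gr x) \<in> SOC" "(g0 x, gr x) \<noteq> 0"
    and "lam \<in> normal_SOC (g0 x, gr x)" "lam \<noteq> 0"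
  shows "quadf (curv g0 gr gg0 Jr x lam) u
           = - fst lam * ((norm (Jr x *v u))\<^sup>2 - (gg0 x \<bullet> u)\<^sup>2) / g0 x"
proof -
  have "curv g0 gr gg0 Jr x lam = (- fst lam / g0 x) *\<^sub>R
          (transpose (Jr x) ** Jr x - (\<chi> i j. gg0 x $ i * gg0 x $ j))"
    using normal_SOC_nonzero_imp_frontier[OF assms] by (simp add: curv_def)
  then show ?thesis
    by (simp only: quadf_curvature_matrix) simp
qed

lemma norm_difference_quotient_sub_le:
  assumes lin: "linear f'" and t: "t > 0"
    and remainder: "norm (f (x + t *\<^sub>R w) - f x - f' (t *\<^sub>R w)) \<le> c * norm (t *\<^sub>R w)"
  shows "norm ((f (x + t *\<^sub>R w) - f x) /\<^sub>R t - f' w) \<le> c * norm w"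
proof -
  have "(f (x + t *\<^sub>R w) - f x) /\<^sub>R t - f' w = (f (x + t *\<^sub>R w) - f x - f' (t *\<^sub>R w)) /\<^sub>R t"
    using t by (simp add: linear_scale[OF lin] algebra_simps)
  then have "norm ((f (x + t *\<^sub>R w) - f x) /\<^sub>R t - f' w)
               = norm (f (x + t *\<^sub>R w) - f x - f' (t *\<^sub>R w)) / t"
    using t by (simp add: divide_inverse_commute)
  also have "\<dots> \<le> c * (t * norm w) / t"
    using remainder t by (intro divide_right_mono) simp_all
  finally show ?thesis
    using t by simp
qed

lemma tendsto_difference_quotient:
  fixes f :: "'a::real_normed_vector \<Rightarrow> 'b::real_normed_vector"
  assumes df: "(f has_derivative f') (at x)" and t_pos: "\<forall>j. t j > 0" and t0: "t \<longlonglongrightarrow> 0"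
    and wv: "w \<longlonglongrightarrow> v"
  shows "(\<lambda>j. (f (x + t j *\<^sub>R w j) - f x) /\<^sub>R t j) \<longlonglongrightarrow> f' v"
proof -
  from df have lin: "bounded_linear f'"
    and D: "\<forall>e>0. \<exists>d>0. \<forall>y. norm (y - x) < d \<longrightarrow> norm (f y - f x - f' (y - x)) \<le> e * norm (y - x)"
    unfolding has_derivative_at_alt by auto
  define M where "M = norm v + 1"
  have M: "M > 0"
    unfolding M_def by (simp add: add_nonneg_pos)
  have "(\<lambda>j. (f (x + t j *\<^sub>R w j) - f x) /\<^sub>R t j - f' (w j)) \<longlonglongrightarrow> 0"
  proof (rule tendstoI)
    fix e :: real
    assume e: "e > 0"
    obtain d where d: "d > 0"
      "\<forall>y. norm (y - x) < d \<longrightarrow> norm (f y - f x - f' (y - x)) \<le> e / (2 * M) * norm (y - x)"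
      using D e M by (metis divide_pos_pos mult_pos_pos zero_less_numeral)
    have "eventually (\<lambda>j. norm (w j) < M) sequentially"
      using tendsto_norm[OF wv] unfolding M_def by (rule order_tendstoD) simp
    moreover have "eventually (\<lambda>j. norm (t j *\<^sub>R w j) < d) sequentially"
      using tendsto_scaleR[OF t0 wv] d(1) by (auto simp: tendsto_iff dist_norm)
    ultimately show "eventually (\<lambda>j. dist ((f (x + t j *\<^sub>R w j) - f x) /\<^sub>R t j - f' (w j)) 0 < e) sequentially"
    proof eventually_elim
      case (elim j)
      have "norm ((f (x + t j *\<^sub>R w j) - f x) /\<^sub>R t j - f' (w j)) \<le> e / (2 * M) * norm (w j)"
        using d(2)[rule_format, of "x + t j *\<^sub>R w j"] elim t_pos bounded_linear.linear[OF lin]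
        by (intro norm_difference_quotient_sub_le) auto
      also have "\<dots> \<le> e / (2 * M) * M"
        using elim e M by (intro mult_left_mono) auto
      also have "\<dots> < e"
        using e M by simp
      finally show ?case
        by (simp add: dist_norm)
    qed
  qed
  moreover have "(\<lambda>j. f' (w j)) \<longlonglongrightarrow> f' v"
    using lin wv by (rule bounded_linear.tendsto)
  ultimately show ?thesis
    using tendsto_add by fastforce
qed

lemma tangent_cone_Gamma_at_vertex:
  assumes d0: "(g0 has_derivative (\<lambda>h. gg0 x \<bullet> h)) (at x)"
    and dr: "(gr has_derivative (\<lambda>h. Jr x *v h)) (at x)"
    and vertex: "g0 x = 0" "gr x = 0"
    and u: "u \<in> tangent_cone (Gamma g0 gr) x"
  shows "norm (Jr x *v u) \<le> gg0 x \<bullet> u"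
proof -
  obtain t w where tw: "\<forall>k. t k > 0" "t \<longlonglongrightarrow> 0" "w \<longlonglongrightarrow> u"
    and feasible: "\<forall>k. x + t k *\<^sub>R w k \<in> Gamma g0 gr"
    using u unfolding tangent_cone_def by blast
  have "norm ((gr (x + t j *\<^sub>R w j) - gr x) /\<^sub>R t j) \<le> (g0 (x + t j *\<^sub>R w j) - g0 x) /\<^sub>R t j" for j
  proof -
    have "norm (gr (x + t j *\<^sub>R w j)) \<le> g0 (x + t j *\<^sub>R w j)"
      using feasible by (simp add: Gamma_def SOC_def)
    then show ?thesis
      using tw(1)[rule_format, of j] vertex by (simp add: divide_right_mono)
  qed
  then show ?thesis
    by (intro tendsto_le[OF trivial_limit_sequentially tendsto_difference_quotient[OF d0 tw]
          tendsto_norm[OF tendsto_difference_quotient[OF dr tw]]] always_eventually allI)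
qed

lemma Lambda_vertex_limit:
  assumes feasible: "\<forall>k. xs k \<in> Gamma g0 gr"
    and mult: "\<forall>k. lam k \<in> Lambda g0 gr gg0 Jr (xs k) (ys k)"
    and lim: "lam \<longlonglongrightarrow> lt" "ys \<longlonglongrightarrow> y"
    and cont: "(\<lambda>k. gg0 (xs k)) \<longlonglongrightarrow> gg0 xb" "(\<lambda>k. Jr (xs k)) \<longlonglongrightarrow> Jr xb"
    and vertex: "g0 xb = 0" "gr xb = 0"
  shows "lt \<in> Lambda g0 gr gg0 Jr xb y"
proof -
  have "norm (snd (lam k)) \<le> - fst (lam k)" for k
    using normal_SOC_subset_dual[of "(g0 (xs k), gr (xs k))" "lam k"] feasible mult
    by (auto simp: Gamma_def Lambda_def SOC_dual_iff)
  then have dual: "norm (snd lt) \<le> - fst lt"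
    by (intro tendsto_le[OF trivial_limit_sequentially tendsto_minus[OF tendsto_fst[OF lim(1)]]
        tendsto_norm[OF tendsto_snd[OF lim(1)]]]) simp
  have "(\<lambda>k. jac_g_adj gg0 Jr (xs k) (lam k)) \<longlonglongrightarrow> jac_g_adj gg0 Jr xb lt"
    unfolding jac_g_adj_def
    by (intro tendsto_add tendsto_scaleR tendsto_fst tendsto_snd tendsto_matrix_vector_mult
        tendsto_transpose lim(1) cont)
  moreover have "(\<lambda>k. jac_g_adj gg0 Jr (xs k) (lam k)) = ys"
    using mult by (auto simp: Lambda_def)
  ultimately have "jac_g_adj gg0 Jr xb lt = y"
    using lim(2) LIMSEQ_unique by metis
  then show ?thesis
    using dual vertex by (simp add: Lambda_def normal_SOC_def zero_prod_def SOC_dual_iff)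
qed

lemma inner_jac_g_limit_eq_0:
  assumes mult: "\<forall>k. lam k \<in> Lambda g0 gr gg0 Jr (xs k) (ys k)"
    and critical: "\<forall>k. u k \<in> critical_cone g0 gr (xs k) (ys k)"
    and lim: "lam \<longlonglongrightarrow> lt" "u \<longlonglongrightarrow> ut"
    and cont: "(\<lambda>k. gg0 (xs k)) \<longlonglongrightarrow> gg0 xb" "(\<lambda>k. Jr (xs k)) \<longlonglongrightarrow> Jr xb"
  shows "lt \<bullet> jac_g gg0 Jr xb ut = 0"
proof -
  have "lam k \<bullet> jac_g gg0 Jr (xs k) (u k) = 0" for k
    using mult critical by (auto simp: inner_jac_g Lambda_def critical_cone_def inner_commute)
  moreover have "(\<lambda>k. lam k \<bullet> jac_g gg0 Jr (xs k) (u k)) \<longlonglongrightarrow> lt \<bullet> jac_g gg0 Jr xb ut"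
    unfolding jac_g_def
    by (intro tendsto_inner tendsto_Pair tendsto_matrix_vector_mult lim cont)
  ultimately show ?thesis
    by (simp add: LIMSEQ_const_iff)
qed

lemma quadf_curv_filterlim_at_top:
  assumes feasible: "\<forall>k. xs k \<in> Gamma g0 gr"
    and normal: "\<forall>k. lam k \<in> normal_SOC (g0 (xs k), gr (xs k))"
    and tangent: "\<forall>k. u k \<in> tangent_cone (Gamma g0 gr) (xs k)"
    and diff: "eventually (\<lambda>k. (g0 has_derivative (\<lambda>h. gg0 (xs k) \<bullet> h)) (at (xs k))
                 \<and> (gr has_derivative (\<lambda>h. Jr (xs k) *v h)) (at (xs k))) sequentially"
    and g0_lim: "(\<lambda>k. g0 (xs k)) \<longlonglongrightarrow> 0"
    and lam0_lim: "(\<lambda>k. fst (lam k)) \<longlonglongrightarrow> l0" "l0 < 0"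
    and Q_lim: "(\<lambda>k. (norm (Jr (xs k) *v u k))\<^sup>2 - (gg0 (xs k) \<bullet> u k)\<^sup>2) \<longlonglongrightarrow> q" "q > 0"
  shows "filterlim (\<lambda>k. quadf (curv g0 gr gg0 Jr (xs k) (lam k)) (u k)) at_top sequentially"
proof -
  define Q where "Q k = (norm (Jr (xs k) *v u k))\<^sup>2 - (gg0 (xs k) \<bullet> u k)\<^sup>2" for k
  have "eventually (\<lambda>k. Q k > 0) sequentially" "eventually (\<lambda>k. fst (lam k) < 0) sequentially"
    using order_tendstoD(1)[OF Q_lim] order_tendstoD(2)[OF lam0_lim] by (simp_all add: Q_def)
  then have boundary: "eventually (\<lambda>k. g0 (xs k) > 0 \<and> quadf (curv g0 gr gg0 Jr (xs k) (lam k)) (u k)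
                          = - fst (lam k) * Q k / g0 (xs k)) sequentially"
    using diff
  proof eventually_elim
    case (elim k)
    have in_SOC: "(g0 (xs k), gr (xs k)) \<in> SOC"
      using feasible by (simp add: Gamma_def)
    have nonvertex: "(g0 (xs k), gr (xs k)) \<noteq> 0"
    proof
      assume "(g0 (xs k), gr (xs k)) = 0"
      then have "norm (Jr (xs k) *v u k) \<le> gg0 (xs k) \<bullet> u k"
        using tangent_cone_Gamma_at_vertex[of g0 gg0 "xs k" gr Jr "u k"] elim(3) tangent
        by (simp add: zero_prod_def)
      then have "(norm (Jr (xs k) *v u k))\<^sup>2 \<le> (gg0 (xs k) \<bullet> u k)\<^sup>2"
        by (meson norm_ge_zero order_trans power_mono)
      with elim(1) show False
        by (simp add: Q_def)
    qed
    have "lam k \<noteq> 0"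
      using elim(2) by auto
    then show ?case
      using fst_pos_if_SOC_nonzero[OF in_SOC nonvertex] normal
        quadf_curv_nonzero_multiplier[of g0 "xs k" gr, OF in_SOC nonvertex] by (simp add: Q_def)
  qed
  have "filterlim (\<lambda>k. - fst (lam k) * Q k / g0 (xs k)) at_top sequentially"
    using lam0_lim Q_lim g0_lim eventually_mono[OF boundary]
    by (intro LIM_at_top_divide[where a = "- l0 * q"] tendsto_mult tendsto_minus)
       (simp_all add: Q_def mult_neg_pos)
  moreover have "eventually (\<lambda>k. quadf (curv g0 gr gg0 Jr (xs k) (lam k)) (u k)
                   = - fst (lam k) * Q k / g0 (xs k)) sequentially"
    using boundary by (rule eventually_mono) simp
  ultimately show ?thesis
    by (simp add: filterlim_cong[OF refl refl])
qed

corollary curvature_gap_limit_nonpos: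
  assumes feasible: "\<forall>k. xs k \<in> Gamma g0 gr"
    and normal: "\<forall>k. lam k \<in> normal_SOC (g0 (xs k), gr (xs k))"
    and tangent: "\<forall>k. u k \<in> tangent_cone (Gamma g0 gr) (xs k)"
    and diff: "eventually (\<lambda>k. (g0 has_derivative (\<lambda>h. gg0 (xs k) \<bullet> h)) (at (xs k))
                 \<and> (gr has_derivative (\<lambda>h. Jr (xs k) *v h)) (at (xs k))) sequentially"
    and g0_lim: "(\<lambda>k. g0 (xs k)) \<longlonglongrightarrow> 0"
    and lam0_lim: "(\<lambda>k. fst (lam k)) \<longlonglongrightarrow> l0" "l0 < 0"
    and Q_lim: "(\<lambda>k. (norm (Jr (xs k) *v u k))\<^sup>2 - (gg0 (xs k) \<bullet> u k)\<^sup>2) \<longlonglongrightarrow> q"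
    and bounded: "limsup (\<lambda>k. ereal (quadf (curv g0 gr gg0 Jr (xs k) (lam k)) (u k))) < \<infinity>"
  shows "q \<le> 0"
proof (rule ccontr)
  assume "\<not> q \<le> 0"
  then have "filterlim (\<lambda>k. quadf (curv g0 gr gg0 Jr (xs k) (lam k)) (u k)) at_top sequentially"
    by (intro quadf_curv_filterlim_at_top[OF feasible normal tangent diff g0_lim lam0_lim Q_lim]) simp
  then show False
    using bounded by (simp add: tendsto_PInfty_eq_at_top[symmetric] lim_imp_Limsup)
qed

theorem lemma4p2:
  fixes f :: "real^'n \<Rightarrow> real" and gf :: "real^'n \<Rightarrow> real^'n" and Hf :: "real^'n \<Rightarrow> real^'n^'n"
    and g0 :: "real^'n \<Rightarrow> real" and gg0 :: "real^'n \<Rightarrow> real^'n" and Hg0 :: "real^'n \<Rightarrow> real^'n^'n"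
    and gr :: "real^'n \<Rightarrow> real^'m" and Jr :: "real^'n \<Rightarrow> real^'n^'m"
    and Hr :: "real^'n \<Rightarrow> 'm \<Rightarrow> real^'n^'n"
    and xb :: "real^'n" and \<sigma> :: real
    and xs xst u :: "nat \<Rightarrow> real^'n" and lam :: "nat \<Rightarrow> real \<times> (real^'m)"
    and lt :: "real \<times> (real^'m)" and ut :: "real^'n"
  assumes U: "open U" "xb \<in> U"
    and f_C2: "\<forall>x\<in>U. (f has_derivative (\<lambda>h. gf x \<bullet> h)) (at x)"
              "\<forall>x\<in>U. (gf has_derivative (\<lambda>h. Hf x *v h)) (at x)"
              "continuous_on U Hf"
    and g0_C2: "\<forall>x\<in>U. (g0 has_derivative (\<lambda>h. gg0 x \<bullet> h)) (at x)"
               "\<forall>x\<in>U. (gg0 has_derivative (\<lambda>h. Hg0 x *v h)) (at x)"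
               "continuous_on U Hg0"
    and gr_C2: "\<forall>x\<in>U. (gr has_derivative (\<lambda>h. Jr x *v h)) (at x)"
               "\<forall>x\<in>U. \<forall>i. ((\<lambda>y. Jr y $ i) has_derivative (\<lambda>h. Hr x i *v h)) (at x)"
               "\<forall>i. continuous_on U (\<lambda>x. Hr x i)"
    and xb_feas: "g0 xb = 0" "gr xb = 0"
    and mscq: "MSCQ g0 gr xb \<sigma>"
    and xs_in: "\<forall>k. xs k \<in> Gamma g0 gr"
    and lim: "xs \<longlonglongrightarrow> xb" "xst \<longlonglongrightarrow> 0" "lam \<longlonglongrightarrow> lt" "u \<longlonglongrightarrow> ut"
    and lam_in: "\<forall>k. lam k \<in> dir_Lambda g0 gr gg0 Jr Hg0 Hr (xs k) (xst k - gf (xs k)) (u k)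
                     \<and> norm (lam k) \<le> \<sigma> * norm (xst k - gf (xs k))"
    and u_in: "\<forall>k. u k \<in> critical_cone g0 gr (xs k) (xst k - gf (xs k)) \<and> norm (u k) = 1"
    and lsup: "limsup (\<lambda>k. ereal (quadf (curv g0 gr gg0 Jr (xs k) (lam k)) (u k))) < \<infinity>"
  shows "lt \<in> Lambda g0 gr gg0 Jr xb (- gf xb) \<and> norm lt \<le> \<sigma> * norm (gf xb)
         \<and> {l \<in> Lambda g0 gr gg0 Jr xb (- gf xb). norm l \<le> \<sigma> * norm (gf xb)}
             \<subseteq> Lambda0 g0 gr gg0 Jr xb (- gf xb)
         \<and> norm ut = 1
         \<and> lt \<bullet> jac_g gg0 Jr xb ut = 0
         \<and> fst lt * ((norm (Jr xb *v ut))\<^sup>2 - (gg0 xb \<bullet> ut)\<^sup>2) = 0"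
proof -
  have mult: "\<forall>k. lam k \<in> Lambda g0 gr gg0 Jr (xs k) (xst k - gf (xs k))"
    using lam_in by (auto simp: dir_Lambda_def)
  have gf_lim: "(\<lambda>k. gf (xs k)) \<longlonglongrightarrow> gf xb"
    using has_derivative_continuous[OF f_C2(2)[rule_format, OF U(2)]] lim(1)
    by (rule isCont_tendsto_compose)
  have gg0_lim: "(\<lambda>k. gg0 (xs k)) \<longlonglongrightarrow> gg0 xb"
    using has_derivative_continuous[OF g0_C2(2)[rule_format, OF U(2)]] lim(1)
    by (rule isCont_tendsto_compose)
  have Jr_lim: "(\<lambda>k. Jr (xs k)) \<longlonglongrightarrow> Jr xb"
    by (rule vec_tendstoI,
        rule isCont_tendsto_compose[OF has_derivative_continuous[OF gr_C2(2)[rule_format, OF U(2)]] lim(1)])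
  have g0_lim: "(\<lambda>k. g0 (xs k)) \<longlonglongrightarrow> 0"
    using isCont_tendsto_compose[OF has_derivative_continuous[OF g0_C2(1)[rule_format, OF U(2)]] lim(1)]
    by (simp add: xb_feas)
  have lt_mult: "lt \<in> Lambda g0 gr gg0 Jr xb (- gf xb)"
    using Lambda_vertex_limit[OF xs_in mult lim(3) tendsto_diff[OF lim(2) gf_lim] gg0_lim Jr_lim xb_feas]
    by simp
  have "(\<lambda>k. \<sigma> * norm (xst k - gf (xs k))) \<longlonglongrightarrow> \<sigma> * norm (0 - gf xb)"
    by (intro tendsto_mult tendsto_const tendsto_norm tendsto_diff lim(2) gf_lim)
  then have lt_bound: "norm lt \<le> \<sigma> * norm (gf xb)"
    using lam_in by (intro tendsto_le[OF trivial_limit_sequentially _ tendsto_norm[OF lim(3)]]) auto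
  have ut_unit: "norm ut = 1"
    using tendsto_norm[OF lim(4)] u_in by (simp add: LIMSEQ_const_iff)
  have orth: "lt \<bullet> jac_g gg0 Jr xb ut = 0"
    using inner_jac_g_limit_eq_0[OF mult _ lim(3,4) gg0_lim Jr_lim] u_in by blast
  have "fst lt * ((norm (Jr xb *v ut))\<^sup>2 - (gg0 xb \<bullet> ut)\<^sup>2) = 0"
  proof (cases "fst lt = 0")
    case False
    have dual: "norm (snd lt) \<le> - fst lt"
      using lt_mult by (simp add: Lambda_def normal_SOC_def xb_feas zero_prod_def SOC_dual_iff)
    then have "fst lt < 0"
      using False norm_ge_zero[of "snd lt"] by linarith
    then have "(norm (Jr xb *v ut))\<^sup>2 - (gg0 xb \<bullet> ut)\<^sup>2 \<le> 0"
      using mult u_in eventually_mono[OF topological_tendstoD[OF lim(1) U]] g0_C2(1) gr_C2(1)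
      by (intro curvature_gap_limit_nonpos[OF xs_in _ _ _ g0_lim tendsto_fst[OF lim(3)] _
            tendsto_diff[OF tendsto_power[OF tendsto_norm[OF tendsto_matrix_vector_mult[OF Jr_lim lim(4)]]]
              tendsto_power[OF tendsto_inner[OF gg0_lim lim(4)]]] lsup])
         (auto simp: Lambda_def critical_cone_def)
    moreover have "\<bar>gg0 xb \<bullet> ut\<bar> \<le> norm (Jr xb *v ut)"
      using abs_fst_le_norm_snd_if_orthogonal_dual[OF dual False orth] by (simp add: jac_g_def)
    then have "(gg0 xb \<bullet> ut)\<^sup>2 \<le> (norm (Jr xb *v ut))\<^sup>2"
      by (metis abs_le_square_iff abs_norm_cancel)
    ultimately show ?thesis
      by simp
  qed simp
  then show ?thesis
    using lt_mult lt_bound ut_unit orth by (auto simp: Lambda0_def)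
qed

end
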